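(* Let $\mathbf C$ and $\mathbf D$ be minimal clone $\tau$-algebras and let $\mathbf E=\mathbf C\times\mathbf D$ be their direct product as clone $\tau$-algebras. The following are equivalent: (1) $\mathbf E$ is minimal; (2) the varieties $\mathrm{Var}(\mathbf C_\tau)$ and $\mathrm{Var}(\mathbf D_\tau)$ are independent; (3) $\mathrm{Clo}\,\mathbf E_\tau=R_{\mathbf E}$. If these conditions hold, then $\mathrm{Var}(\mathbf E_\tau)=\mathrm{Var}(\mathbf C_\tau)\times\mathrm{Var}(\mathbf D_\tau)=\mathrm{Var}(\mathbf C_\tau)\vee\mathrm{Var}(\mathbf D_\tau)$, where the join is taken in the lattice of subvarieties of $\mathrm{Var}(\mathbf E_\tau)$.
   Context: A clone $\tau$-algebra is an algebra $\mathbf C=(C,\sigma^{\mathbf C}\ (\sigma\in\tau),q_n^{\mathbf C}\ (n\ge0),\mathsf e_i^{\mathbf C}\ (i\ge1))$ with $\mathsf e_i$ nullary, $q_n$ of arity $n+1$, satisfying: (C1) $q_n(\mathsf e_i,x_1,\dots,x_n)=x_i$ ($1\le i\le n$); (C2) $q_n(\mathsf e_j,x_1,\dots,x_n)=\mathsf e_j$ ($j>n$); (C3) $q_n(x,\mathsf e_1,\dots,\mathsf e_n)=x$; (C4) $q_k(x,y_1,\dots,y_k)=q_n(x,y_1,\dots,y_k,\mathsf e_{k+1},\dots,\mathsf e_n)$ ($n>k$); (C5) $q_n(q_n(x,\mathbf y),\mathbf z)=q_n(x,q_n(y_1,\mathbf z),\dots,q_n(y_n,\mathbf z))$; (C6)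 $q_n(\sigma(x_1,\dots,x_k),\mathbf y)=\sigma(q_n(x_1,\mathbf y),\dots,q_n(x_k,\mathbf y))$ for $\sigma\in\tau$ of arity $k$. $\mathbf C_\tau=(C,\sigma^{\mathbf C})_{\sigma\in\tau}$ is its $\tau$-reduct. $\mathbf C$ is minimal if $C$ is the smallest subset containing all $\mathsf e_i^{\mathbf C}$ and closed under all $\sigma^{\mathbf C}$. An element $a$ is independent of $\mathsf e_n$ if $q_n(a,\mathsf e_1,\dots,\mathsf e_{n-1},\mathsf e_{n+1})=a$; its dimension is the largest $n$ it depends on ($0$ if none). A function $f:E^k\to E$ is $\mathbf E$-representable if $f(\mathsf e_1,\dots,\mathsf e_k)$ has dimension $\le k$ and $f(a_1,\dots,a_k)=q_k(f(\mathsf e_1,\dots,\mathsf e_k),a_1,\dots,a_k)$ for all $a_i$; $R_{\mathbf E}$ is the set of these. $\mathrm{Clo}\,\mathbf E_\tau$ is the clone of term operations of $\mathbf E_\tau$ (smallest set of finitary operations, nullary included, containing projections and the basic operations, closed under composition and under restriction, i.e. dropping a last argument on which the operation does not depend). Subvarieties $\mathcal V_1,\mathcal V_2$ of type $\tau$ are independent if there is a $\tau$-term $t(v_1,v_2)$ with $\mathcal V_1\models t(v_1,v_2)=v_1$ and $\mathcal V_2\models t(v_1,v_2)=v_2$. The product of varieties is $\mathcal V_1\times\mathcal V_2=\{\mathbf A: \mathbf A\cong\mathbf A_1\times\mathbf A_2,\ \mathbf A_i\in\mathcal V_i\}$. *)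

theory Defs
  imports Main
begin

text \<open>A type tau is given by a type 'f of operation symbols with an arity function
  ar :: 'f => nat.  A tau-algebra on a carrier A :: 'a set is given by
  ops :: 'f => 'a list => 'a (ops s applied to lists of length ar s).\<close>

datatype 'f trm = Var nat | App 'f "'f trm list"

fun wf_trm :: "('f \<Rightarrow> nat) \<Rightarrow> 'f trm \<Rightarrow> bool" where
  "wf_trm ar (Var i) = True"
| "wf_trm ar (App s ts) = (length ts = ar s \<and> (\<forall>t\<in>set ts. wf_trm ar t))"

fun vars_trm :: "'f trm \<Rightarrow> nat set" where
  "vars_trm (Var i) = {i}"
| "vars_trm (App s ts) = (\<Union>t\<in>set ts. vars_trm t)"

fun eval_trm :: "('f \<Rightarrow> 'a list \<Rightarrow> 'a) \<Rightarrow> (nat \<Rightarrow> 'a) \<Rightarrow> 'f trm \<Rightarrow> 'a" where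
  "eval_trm ops \<rho> (Var i) = \<rho> i"
| "eval_trm ops \<rho> (App s ts) = ops s (map (eval_trm ops \<rho>) ts)"

definition is_alg :: "('f \<Rightarrow> nat) \<Rightarrow> 'a set \<Rightarrow> ('f \<Rightarrow> 'a list \<Rightarrow> 'a) \<Rightarrow> bool" where
  "is_alg ar A ops \<longleftrightarrow>
     (\<forall>s xs. xs \<in> lists A \<longrightarrow> length xs = ar s \<longrightarrow> ops s xs \<in> A)"

text \<open>Identities are pairs of well-formed terms (variables indexed by nat, 0-based).\<close>

definition sat_id :: "'a set \<Rightarrow> ('f \<Rightarrow> 'a list \<Rightarrow> 'a) \<Rightarrow> 'f trm \<times> 'f trm \<Rightarrow> bool" where
  "sat_id A ops st \<longleftrightarrow>
     (\<forall>\<rho>. (\<forall>i. \<rho> i \<in> A) \<longrightarrow> eval_trm ops \<rho> (fst st) = eval_trm ops \<rho> (snd st))"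

definition Id_of :: "('f \<Rightarrow> nat) \<Rightarrow> 'a set \<Rightarrow> ('f \<Rightarrow> 'a list \<Rightarrow> 'a) \<Rightarrow> ('f trm \<times> 'f trm) set" where
  "Id_of ar A ops = {(s, t). wf_trm ar s \<and> wf_trm ar t \<and> sat_id A ops (s, t)}"

text \<open>The variety Var(A) generated by A is (Birkhoff) Mod(Id(A)); it is a class
  ranging over all types, represented here at an arbitrary type 'b.\<close>

definition Mod :: "('f \<Rightarrow> nat) \<Rightarrow> ('f trm \<times> 'f trm) set \<Rightarrow> ('b set \<times> ('f \<Rightarrow> 'b list \<Rightarrow> 'b)) set" where
  "Mod ar I = {(B, opsB). B \<noteq> {} \<and> is_alg ar B opsB \<and> (\<forall>st\<in>I. sat_id B opsB st)}"

abbreviation Var_of :: "('f \<Rightarrow> nat) \<Rightarrow> 'a set \<Rightarrow> ('f \<Rightarrow> 'a list \<Rightarrow> 'a) \<Rightarrow> ('b set \<times> ('f \<Rightarrow> 'b list \<Rightarrow> 'b)) set" where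
  "Var_of ar A ops \<equiv> Mod ar (Id_of ar A ops)"

text \<open>A variety satisfies an identity iff the identity belongs to the equational theory;
  for Var(A) this theory is Id(A).\<close>

definition indep_varieties :: "('f \<Rightarrow> nat) \<Rightarrow> ('f trm \<times> 'f trm) set \<Rightarrow> ('f trm \<times> 'f trm) set \<Rightarrow> bool" where
  "indep_varieties ar I1 I2 \<longleftrightarrow>
     (\<exists>t. wf_trm ar t \<and> vars_trm t \<subseteq> {0, 1} \<and> (t, Var 0) \<in> I1 \<and> (t, Var 1) \<in> I2)"

definition prod_ops :: "('f \<Rightarrow> 'a list \<Rightarrow> 'a) \<Rightarrow> ('f \<Rightarrow> 'b list \<Rightarrow> 'b) \<Rightarrow> 'f \<Rightarrow> ('a \<times> 'b) list \<Rightarrow> 'a \<times> 'b" where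
  "prod_ops opsA opsB s xs = (opsA s (map fst xs), opsB s (map snd xs))"

definition alg_iso :: "('f \<Rightarrow> nat) \<Rightarrow> 'a set \<Rightarrow> ('f \<Rightarrow> 'a list \<Rightarrow> 'a) \<Rightarrow> 'b set \<Rightarrow> ('f \<Rightarrow> 'b list \<Rightarrow> 'b) \<Rightarrow> bool" where
  "alg_iso ar A opsA B opsB \<longleftrightarrow>
     (\<exists>h. bij_betw h A B \<and>
        (\<forall>s xs. xs \<in> lists A \<longrightarrow> length xs = ar s \<longrightarrow> h (opsA s xs) = opsB s (map h xs)))"

text \<open>V1 x V2 = {A. A isomorphic to A1 x A2 with Ai in Vi}, at type 'b.  Since members
  are nonempty, the factors have cardinality at most that of A and may be taken in 'b.\<close>

definition prod_variety :: "('f \<Rightarrow> nat) \<Rightarrow> ('b set \<times> ('f \<Rightarrow> 'b list \<Rightarrow> 'b)) set \<Rightarrow> ('b set \<times> ('f \<Rightarrow> 'b list \<Rightarrow> 'b)) set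
    \<Rightarrow> ('b set \<times> ('f \<Rightarrow> 'b list \<Rightarrow> 'b)) set" where
  "prod_variety ar V1 V2 = {(A, opsA). is_alg ar A opsA \<and> A \<noteq> {} \<and>
     (\<exists>A1 ops1 A2 ops2. (A1, ops1) \<in> V1 \<and> (A2, ops2) \<in> V2 \<and>
        alg_iso ar A opsA (A1 \<times> A2) (prod_ops ops1 ops2))}"

text \<open>Join of Var(A) and Var(B) in the lattice of varieties: the smallest variety containing
  both, i.e. the models of the identities common to both.\<close>

definition join_variety :: "('f \<Rightarrow> nat) \<Rightarrow> ('f trm \<times> 'f trm) set \<Rightarrow> ('f trm \<times> 'f trm) set
    \<Rightarrow> ('b set \<times> ('f \<Rightarrow> 'b list \<Rightarrow> 'b)) set" where
  "join_variety ar I1 I2 = Mod ar (I1 \<inter> I2)"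

text \<open>q n x ys is q_n(x, y_1, ..., y_n) with ys = [y_1,...,y_n]; e i is e_i (i >= 1; e 0 is
  unused).\<close>

abbreviation evec :: "(nat \<Rightarrow> 'a) \<Rightarrow> nat \<Rightarrow> 'a list" where
  "evec e n \<equiv> map e [1..<Suc n]"

definition clone_alg :: "('f \<Rightarrow> nat) \<Rightarrow> 'a set \<Rightarrow> ('f \<Rightarrow> 'a list \<Rightarrow> 'a)
    \<Rightarrow> (nat \<Rightarrow> 'a \<Rightarrow> 'a list \<Rightarrow> 'a) \<Rightarrow> (nat \<Rightarrow> 'a) \<Rightarrow> bool" where
  "clone_alg ar C ops q e \<longleftrightarrow>
     is_alg ar C ops \<and>
     (\<forall>i\<ge>1. e i \<in> C) \<and>
     (\<forall>n x ys. x \<in> C \<longrightarrow> ys \<in> lists C \<longrightarrow> length ys = n \<longrightarrow> q n x ys \<in> C) \<and>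
     \<comment> \<open>C1\<close>
     (\<forall>n i xs. 1 \<le> i \<longrightarrow> i \<le> n \<longrightarrow> xs \<in> lists C \<longrightarrow> length xs = n \<longrightarrow> q n (e i) xs = xs ! (i - 1)) \<and>
     \<comment> \<open>C2\<close>
     (\<forall>n j xs. n < j \<longrightarrow> xs \<in> lists C \<longrightarrow> length xs = n \<longrightarrow> q n (e j) xs = e j) \<and>
     \<comment> \<open>C3\<close>
     (\<forall>n x. x \<in> C \<longrightarrow> q n x (evec e n) = x) \<and>
     \<comment> \<open>C4\<close>
     (\<forall>n k x ys. k < n \<longrightarrow> x \<in> C \<longrightarrow> ys \<in> lists C \<longrightarrow> length ys = k \<longrightarrow>
        q k x ys = q n x (ys @ map e [Suc k..<Suc n])) \<and>
     \<comment> \<open>C5\<close>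
     (\<forall>n x ys zs. x \<in> C \<longrightarrow> ys \<in> lists C \<longrightarrow> zs \<in> lists C \<longrightarrow> length ys = n \<longrightarrow> length zs = n \<longrightarrow>
        q n (q n x ys) zs = q n x (map (\<lambda>y. q n y zs) ys)) \<and>
     \<comment> \<open>C6\<close>
     (\<forall>s n xs ys. xs \<in> lists C \<longrightarrow> length xs = ar s \<longrightarrow> ys \<in> lists C \<longrightarrow> length ys = n \<longrightarrow>
        q n (ops s xs) ys = ops s (map (\<lambda>x. q n x ys) xs))"

inductive_set gen_e :: "('f \<Rightarrow> nat) \<Rightarrow> ('f \<Rightarrow> 'a list \<Rightarrow> 'a) \<Rightarrow> (nat \<Rightarrow> 'a) \<Rightarrow> 'a set"
  for ar ops e where
  gen_e_base: "1 \<le> i \<Longrightarrow> e i \<in> gen_e ar ops e"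
| gen_e_op: "xs \<in> lists (gen_e ar ops e) \<Longrightarrow> length xs = ar s \<Longrightarrow> ops s xs \<in> gen_e ar ops e"

definition minimal_clone :: "('f \<Rightarrow> nat) \<Rightarrow> 'a set \<Rightarrow> ('f \<Rightarrow> 'a list \<Rightarrow> 'a) \<Rightarrow> (nat \<Rightarrow> 'a) \<Rightarrow> bool" where
  "minimal_clone ar C ops e \<longleftrightarrow> C = gen_e ar ops e"

definition prod_q :: "(nat \<Rightarrow> 'a \<Rightarrow> 'a list \<Rightarrow> 'a) \<Rightarrow> (nat \<Rightarrow> 'b \<Rightarrow> 'b list \<Rightarrow> 'b)
    \<Rightarrow> nat \<Rightarrow> 'a \<times> 'b \<Rightarrow> ('a \<times> 'b) list \<Rightarrow> 'a \<times> 'b" where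
  "prod_q qA qB n x ys = (qA n (fst x) (map fst ys), qB n (snd x) (map snd ys))"

definition prod_e :: "(nat \<Rightarrow> 'a) \<Rightarrow> (nat \<Rightarrow> 'b) \<Rightarrow> nat \<Rightarrow> 'a \<times> 'b" where
  "prod_e eA eB i = (eA i, eB i)"

definition indep_of :: "(nat \<Rightarrow> 'a \<Rightarrow> 'a list \<Rightarrow> 'a) \<Rightarrow> (nat \<Rightarrow> 'a) \<Rightarrow> 'a \<Rightarrow> nat \<Rightarrow> bool" where
  "indep_of q e a n \<longleftrightarrow> q n a (map e [1..<n] @ [e (Suc n)]) = a"

definition dim_le :: "(nat \<Rightarrow> 'a \<Rightarrow> 'a list \<Rightarrow> 'a) \<Rightarrow> (nat \<Rightarrow> 'a) \<Rightarrow> 'a \<Rightarrow> nat \<Rightarrow> bool" where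
  "dim_le q e a k \<longleftrightarrow> (\<forall>n>k. indep_of q e a n)"

text \<open>Finitary operations on E are pairs (k, f) with f :: 'a list => 'a, only the values of
  f on E^k (lists over E of length k) being relevant.\<close>

definition repr_ops :: "'a set \<Rightarrow> (nat \<Rightarrow> 'a \<Rightarrow> 'a list \<Rightarrow> 'a) \<Rightarrow> (nat \<Rightarrow> 'a) \<Rightarrow> (nat \<times> ('a list \<Rightarrow> 'a)) set" where
  "repr_ops E q e = {(k, f).
      (\<forall>xs. xs \<in> lists E \<longrightarrow> length xs = k \<longrightarrow> f xs \<in> E) \<and>
      dim_le q e (f (evec e k)) k \<and>
      (\<forall>as. as \<in> lists E \<longrightarrow> length as = k \<longrightarrow> f as = q k (f (evec e k)) as)}"

text \<open>Clone of term operations of (E, ops): smallest set of finitary operations containing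
  projections and basic operations, closed under composition and restriction (dropping a
  last argument the operation does not depend on); operations are identified when they
  agree on E^k (rule clo_ext).\<close>

inductive_set Clo :: "('f \<Rightarrow> nat) \<Rightarrow> 'a set \<Rightarrow> ('f \<Rightarrow> 'a list \<Rightarrow> 'a) \<Rightarrow> (nat \<times> ('a list \<Rightarrow> 'a)) set"
  for ar E ops where
  clo_proj: "i < k \<Longrightarrow> (k, \<lambda>xs. xs ! i) \<in> Clo ar E ops"
| clo_basic: "(ar s, ops s) \<in> Clo ar E ops"
| clo_comp: "(n, f) \<in> Clo ar E ops \<Longrightarrow> (\<forall>i<n. (k, gs i) \<in> Clo ar E ops) \<Longrightarrow>
     (k, \<lambda>xs. f (map (\<lambda>i. gs i xs) [0..<n])) \<in> Clo ar E ops"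
| clo_restr: "(Suc k, f) \<in> Clo ar E ops \<Longrightarrow>
     (\<forall>xs y. xs \<in> lists E \<longrightarrow> length xs = k \<longrightarrow> y \<in> E \<longrightarrow> g xs = f (xs @ [y])) \<Longrightarrow>
     (k, g) \<in> Clo ar E ops"
| clo_ext: "(k, f) \<in> Clo ar E ops \<Longrightarrow>
     (\<forall>xs. xs \<in> lists E \<longrightarrow> length xs = k \<longrightarrow> g xs = f xs) \<Longrightarrow> (k, g) \<in> Clo ar E ops"

end

theory Submission
  imports Defs
begin

text \<open>
  The elements generated by the e_i are exactly the values t(e) of terms at the generators, and
  evaluating t at x_1, ..., x_n gives q_n(t(e), x_1, ..., x_n). Hence (e_1, e_2) is generated in
  C x D iff some term t(v_1, v_2) is the first projection in C and the second projection in D, and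
  such a t produces every pair as (c, d) = t((c, c'), (d', d)) from terms for c and for d.

  Term operations are always representable. Conversely, if every element a of dimension at most k
  gives a term operation q_k(a, -), then a = q_k(a, e_1, ..., e_k) is generated; and in a minimal
  clone algebra it does, because a is a term value t(e) and q_k(a, -) is obtained from the term
  operation of t by dropping inessential arguments.

  Finally, such a t is a decomposition operation on every model A of the identities common to C
  and D: x \<mapsto> (t(x, a), t(a, x)) maps A isomorphically onto the product of two retracts of A, the
  first satisfying Id(C) and the second Id(D). Together with Id(C x D) = Id(C) \<inter> Id(D) this
  identifies Var(C x D) with both the product and the join of the two varieties.
\<close>

section \<open>Terms and identities\<close>

declare upt_Suc [simp del] \<comment> \<open>keeps \<open>evec e n = map e [1..<Suc n]\<close> folded\<close>

fun subst_trm :: "(nat \<Rightarrow> 'f trm) \<Rightarrow> 'f trm \<Rightarrow> 'f trm" where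
  "subst_trm \<sigma> (Var i) = \<sigma> i"
| "subst_trm \<sigma> (App s ts) = App s (map (subst_trm \<sigma>) ts)"

lemma eval_subst_trm:
  "eval_trm ops \<rho> (subst_trm \<sigma> t) = eval_trm ops (\<lambda>i. eval_trm ops \<rho> (\<sigma> i)) t"
  by (induction t) (auto cong: map_cong)

lemma wf_subst_trm: "wf_trm ar t \<Longrightarrow> (\<And>i. wf_trm ar (\<sigma> i)) \<Longrightarrow> wf_trm ar (subst_trm \<sigma> t)"
  by (induction t) auto

lemma vars_subst_trm: "vars_trm (subst_trm \<sigma> t) = (\<Union>i\<in>vars_trm t. vars_trm (\<sigma> i))"
  by (induction t) auto

lemma vars_trm_bounded:
  obtains n where "vars_trm t \<subseteq> {..<n}" and "m \<le> n"
proof -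
  have "finite (vars_trm t)"
    by (induction t) auto
  then obtain N where "vars_trm t \<subseteq> {..<N}"
    by (auto simp: finite_nat_set_iff_bounded)
  then have "vars_trm t \<subseteq> {..<max N m}"
    by auto
  then show ?thesis
    using that by simp
qed

lemma eval_shift_trm:
  "eval_trm ops \<rho> (subst_trm (\<lambda>i. Var (Suc i)) t) = eval_trm ops (\<lambda>i. \<rho> (Suc i)) t"
  by (simp add: eval_subst_trm)

definition subst2 :: "'f trm \<Rightarrow> 'f trm \<Rightarrow> 'f trm \<Rightarrow> 'f trm" where
  "subst2 t p r = subst_trm (\<lambda>i. if i = 0 then p else r) t"

lemma eval_subst2:
  "eval_trm ops \<rho> (subst2 t p r)
     = eval_trm ops (\<lambda>i. if i = 0 then eval_trm ops \<rho> p else eval_trm ops \<rho> r) t"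
  unfolding subst2_def eval_subst_trm by (simp add: if_distrib)

lemma wf_subst2: "wf_trm ar t \<Longrightarrow> wf_trm ar p \<Longrightarrow> wf_trm ar r \<Longrightarrow> wf_trm ar (subst2 t p r)"
  unfolding subst2_def by (rule wf_subst_trm) auto

lemma vars_subst2: "vars_trm (subst2 t p r) \<subseteq> vars_trm p \<union> vars_trm r"
  unfolding subst2_def vars_subst_trm by (auto split: if_splits)

lemma eval_trm_closed:
  "is_alg ar A ops \<Longrightarrow> wf_trm ar t \<Longrightarrow> \<forall>i. \<rho> i \<in> A \<Longrightarrow> eval_trm ops \<rho> t \<in> A"
  by (induction t) (auto simp: is_alg_def in_lists_conv_set)

lemma eval_trm_prod_ops:
  "eval_trm (prod_ops ops1 ops2) \<rho> t = (eval_trm ops1 (fst \<circ> \<rho>) t, eval_trm ops2 (snd \<circ> \<rho>) t)"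
  by (induction t) (auto simp: prod_ops_def cong: map_cong)

lemma Id_ofI:
  "wf_trm ar p \<Longrightarrow> wf_trm ar r \<Longrightarrow> (\<And>\<rho>. \<forall>i. \<rho> i \<in> A \<Longrightarrow> eval_trm ops \<rho> p = eval_trm ops \<rho> r)
    \<Longrightarrow> (p, r) \<in> Id_of ar A ops"
  by (simp add: Id_of_def sat_id_def)

lemma Id_ofD: "(p, r) \<in> Id_of ar A ops \<Longrightarrow> \<forall>i. \<rho> i \<in> A \<Longrightarrow> eval_trm ops \<rho> p = eval_trm ops \<rho> r"
  by (simp add: Id_of_def sat_id_def)

definition evec_skip :: "(nat \<Rightarrow> 'a) \<Rightarrow> nat \<Rightarrow> 'a list" where
  "evec_skip e n = map e [1..<n] @ [e (Suc n)]"

lemma indep_of_evec_skip: "indep_of q e a n \<longleftrightarrow> q n a (evec_skip e n) = a"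
  by (simp add: indep_of_def evec_skip_def)

lemma length_evec_skip: "0 < n \<Longrightarrow> length (evec_skip e n) = n"
  by (simp add: evec_skip_def)

lemma nth_evec_skip: "1 \<le> i \<Longrightarrow> i < n \<Longrightarrow> evec_skip e n ! (i - 1) = e i"
  by (auto simp: evec_skip_def nth_append)

lemma dim_le_mono: "dim_le q e a k \<Longrightarrow> k \<le> m \<Longrightarrow> dim_le q e a m"
  unfolding dim_le_def by auto

lemma repr_opsD:
  assumes "(k, f) \<in> repr_ops E q e"
  shows "xs \<in> lists E \<Longrightarrow> length xs = k \<Longrightarrow> f xs \<in> E"
    and "dim_le q e (f (evec e k)) k"
    and "as \<in> lists E \<Longrightarrow> length as = k \<Longrightarrow> f as = q k (f (evec e k)) as"
  using assms unfolding repr_ops_def by blast+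

section \<open>Generated elements and term operations\<close>

lemma eval_trm_in_gen_e:
  "wf_trm ar t \<Longrightarrow> \<forall>i. \<rho> i \<in> gen_e ar ops e \<Longrightarrow> eval_trm ops \<rho> t \<in> gen_e ar ops e"
  by (induction t) (auto intro!: gen_e.gen_e_op)

text \<open>Term variables are 0-based and generators 1-based: \<open>Var i\<close> stands for \<open>e (Suc i)\<close>.\<close>

lemma gen_e_iff_term_value:
  "a \<in> gen_e ar ops e \<longleftrightarrow> (\<exists>t. wf_trm ar t \<and> a = eval_trm ops (\<lambda>i. e (Suc i)) t)"
proof
  assume "a \<in> gen_e ar ops e"
  then show "\<exists>t. wf_trm ar t \<and> a = eval_trm ops (\<lambda>i. e (Suc i)) t"
  proof (induction rule: gen_e.induct)
    case (gen_e_base i)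
    then show ?case
      by (intro exI[of _ "Var (i - 1)"]) simp
  next
    case (gen_e_op xs s)
    then have "\<forall>x\<in>set xs. \<exists>t. wf_trm ar t \<and> x = eval_trm ops (\<lambda>i. e (Suc i)) t"
      by auto
    then obtain T where T: "\<forall>x\<in>set xs. wf_trm ar (T x) \<and> x = eval_trm ops (\<lambda>i. e (Suc i)) (T x)"
      by (metis bchoice)
    then have "map (eval_trm ops (\<lambda>i. e (Suc i))) (map T xs) = xs"
      by (induction xs) auto
    with T gen_e_op.hyps show ?case
      by (intro exI[of _ "App s (map T xs)"]) auto
  qed
next
  assume "\<exists>t. wf_trm ar t \<and> a = eval_trm ops (\<lambda>i. e (Suc i)) t"
  then obtain t where "wf_trm ar t" "a = eval_trm ops (\<lambda>i. e (Suc i)) t"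
    by blast
  moreover have "\<forall>i. e (Suc i) \<in> gen_e ar ops e"
    by (auto intro: gen_e.gen_e_base)
  ultimately show "a \<in> gen_e ar ops e"
    by (simp add: eval_trm_in_gen_e)
qed

lemma term_op_in_Clo:
  "wf_trm ar t \<Longrightarrow> vars_trm t \<subseteq> {..<n} \<Longrightarrow> (n, \<lambda>xs. eval_trm ops (\<lambda>i. xs ! i) t) \<in> Clo ar E ops"
proof (induction t)
  case (Var i)
  then show ?case by (auto intro: Clo.clo_proj)
next
  case (App s ts)
  have "(n, \<lambda>xs. eval_trm ops (\<lambda>i. xs ! i) (ts ! j)) \<in> Clo ar E ops" if "j < ar s" for j
  proof -
    have "ts ! j \<in> set ts"
      using that App.prems(1) by simp
    with App show ?thesis by auto
  qed
  then have "(n, \<lambda>xs. ops s (map (\<lambda>j. eval_trm ops (\<lambda>i. xs ! i) (ts ! j)) [0..<ar s]))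
      \<in> Clo ar E ops"
    by (intro Clo.clo_comp[OF Clo.clo_basic]) auto
  moreover have "map (\<lambda>i. eval_trm ops \<rho> (ts ! i)) [0..<ar s] = map (eval_trm ops \<rho>) ts" for \<rho>
    using App.prems(1) by (intro nth_equalityI) auto
  ultimately show ?case by simp
qed

lemma Clo_closed_gen_e:
  assumes sub: "gen_e ar ops e \<subseteq> E"
  shows "(k, f) \<in> Clo ar E ops \<Longrightarrow> xs \<in> lists (gen_e ar ops e) \<Longrightarrow> length xs = k \<Longrightarrow>
    f xs \<in> gen_e ar ops e"
proof (induction arbitrary: xs rule: Clo.induct)
  case (clo_proj i k)
  then show ?case by auto
next
  case (clo_basic s)
  then show ?case by (auto intro: gen_e.gen_e_op)
next
  case (clo_comp n f k gs)
  have "gs i xs \<in> gen_e ar ops e" if "i < n" for i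
    using clo_comp.IH(2) clo_comp.prems that by blast
  then have "map (\<lambda>i. gs i xs) [0..<n] \<in> lists (gen_e ar ops e)"
    by auto
  with clo_comp.IH(1) show ?case by simp
next
  case (clo_restr k f g)
  have e1: "e 1 \<in> gen_e ar ops e"
    by (rule gen_e.gen_e_base) simp
  have "g xs = f (xs @ [e 1])"
    using clo_restr.hyps(2) clo_restr.prems sub e1 by auto
  also have "\<dots> \<in> gen_e ar ops e"
    using clo_restr.IH clo_restr.prems e1 by simp
  finally show ?case .
next
  case (clo_ext k f g)
  then have "g xs = f xs"
    using sub by auto
  with clo_ext show ?case by simp
qed

section \<open>Clone algebras: dimension and representable operations\<close>

locale clone_algebra =
  fixes ar :: "'f \<Rightarrow> nat" and E :: "'a set" and ops :: "'f \<Rightarrow> 'a list \<Rightarrow> 'a"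
    and q :: "nat \<Rightarrow> 'a \<Rightarrow> 'a list \<Rightarrow> 'a" and e :: "nat \<Rightarrow> 'a"
  assumes clone_alg: "clone_alg ar E ops q e"
begin

lemma is_alg: "is_alg ar E ops"
  using clone_alg by (simp add: clone_alg_def)

lemma ops_closed: "xs \<in> lists E \<Longrightarrow> length xs = ar s \<Longrightarrow> ops s xs \<in> E"
  using is_alg by (simp add: is_alg_def)

lemma e_closed: "1 \<le> i \<Longrightarrow> e i \<in> E"
  using clone_alg by (simp add: clone_alg_def)

lemma q_closed: "x \<in> E \<Longrightarrow> ys \<in> lists E \<Longrightarrow> length ys = n \<Longrightarrow> q n x ys \<in> E"
  using clone_alg by (simp add: clone_alg_def)

lemma q_e_nth: "1 \<le> i \<Longrightarrow> i \<le> n \<Longrightarrow> xs \<in> lists E \<Longrightarrow> length xs = n \<Longrightarrow> q n (e i) xs = xs ! (i - 1)"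
  using clone_alg by (simp add: clone_alg_def)

lemma q_e_beyond: "n < j \<Longrightarrow> xs \<in> lists E \<Longrightarrow> length xs = n \<Longrightarrow> q n (e j) xs = e j"
  using clone_alg unfolding clone_alg_def by blast

lemma q_evec: "x \<in> E \<Longrightarrow> q n x (evec e n) = x"
  using clone_alg by (simp add: clone_alg_def)

lemma q_pad: "k < n \<Longrightarrow> x \<in> E \<Longrightarrow> ys \<in> lists E \<Longrightarrow> length ys = k \<Longrightarrow>
    q k x ys = q n x (ys @ map e [Suc k..<Suc n])"
  using clone_alg unfolding clone_alg_def by blast

lemma q_q: "x \<in> E \<Longrightarrow> ys \<in> lists E \<Longrightarrow> zs \<in> lists E \<Longrightarrow> length ys = n \<Longrightarrow> length zs = n \<Longrightarrow>
    q n (q n x ys) zs = q n x (map (\<lambda>y. q n y zs) ys)"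
  using clone_alg unfolding clone_alg_def by blast

lemma q_ops: "xs \<in> lists E \<Longrightarrow> length xs = ar s \<Longrightarrow> ys \<in> lists E \<Longrightarrow> length ys = n \<Longrightarrow>
    q n (ops s xs) ys = ops s (map (\<lambda>x. q n x ys) xs)"
  using clone_alg unfolding clone_alg_def by blast

lemma evec_in_lists: "evec e n \<in> lists E"
  using e_closed by auto

lemma map_e_in_lists: "map e [Suc a..<b] \<in> lists E"
  using e_closed by auto

lemma evec_skip_in_lists: "evec_skip e n \<in> lists E"
  using e_closed by (auto simp: evec_skip_def)

lemma map_q_evec:
  assumes "ys \<in> lists E" "length ys = n" "k \<le> n"
  shows "map (\<lambda>y. q n y ys) (evec e k) = take k ys"
  by (rule nth_equalityI) (use assms q_e_nth in auto)

lemma q_pad_le: "k \<le> n \<Longrightarrow> x \<in> E \<Longrightarrow> ys \<in> lists E \<Longrightarrow> length ys = k \<Longrightarrow>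
    q k x ys = q n x (ys @ map e [Suc k..<Suc n])"
  using q_pad by (cases "k = n") auto

lemma map_q_e_range:
  assumes "ys \<in> lists E" "length ys = n" "m \<le> n"
  shows "map (\<lambda>y. q n y ys) (map e [Suc m..<Suc n]) = drop m ys"
  by (rule nth_equalityI) (use assms q_e_nth in auto)

lemma dim_le_e:
  assumes "1 \<le> i" "i \<le> k"
  shows "dim_le q e (e i) k"
  unfolding dim_le_def indep_of_evec_skip
proof (intro allI impI)
  fix n assume "k < n"
  then have "q n (e i) (evec_skip e n) = evec_skip e n ! (i - 1)"
    using assms evec_skip_in_lists by (intro q_e_nth) (auto simp: length_evec_skip)
  also have "\<dots> = e i"
    using assms \<open>k < n\<close> by (intro nth_evec_skip) auto
  finally show "q n (e i) (evec_skip e n) = e i" .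
qed

lemma dim_le_ops:
  assumes xs: "xs \<in> lists E" "length xs = ar s" and dim: "\<forall>x\<in>set xs. dim_le q e x k"
  shows "dim_le q e (ops s xs) k"
  unfolding dim_le_def indep_of_evec_skip
proof (intro allI impI)
  fix n assume "k < n"
  then have "map (\<lambda>x. q n x (evec_skip e n)) xs = xs"
    using dim by (auto simp: dim_le_def indep_of_evec_skip intro: map_idI)
  then show "q n (ops s xs) (evec_skip e n) = ops s xs"
    using q_ops[where ys = "evec_skip e n" and n = n] xs evec_skip_in_lists \<open>k < n\<close>
    by (simp add: length_evec_skip)
qed

lemma q_Suc_indep:
  assumes ind: "indep_of q e a (Suc k)" and a: "a \<in> E"
    and xs: "xs \<in> lists E" "length xs = k" and b: "b \<in> E"
  shows "q (Suc k) a (xs @ [b]) = q k a xs"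
proof -
  have any: "q (Suc k) a (xs @ [y]) = q (Suc k) a (xs @ [e (Suc (Suc k))])" if y: "y \<in> E" for y
  proof -
    have "map (\<lambda>z. q (Suc k) z (xs @ [y])) (evec_skip e (Suc k)) = xs @ [e (Suc (Suc k))]"
      using map_q_evec[of "xs @ [y]" "Suc k" k] q_e_beyond[of "Suc k" "Suc (Suc k)" "xs @ [y]"] xs y
      by (simp add: evec_skip_def)
    then show ?thesis
      using q_q[where x = a and ys = "evec_skip e (Suc k)" and zs = "xs @ [y]"] a xs y ind
        evec_skip_in_lists
      by (simp add: indep_of_evec_skip length_evec_skip)
  qed
  have "q k a xs = q (Suc k) a (xs @ [e (Suc k)])"
    using q_pad[of k "Suc k" a xs] a xs by (simp add: upt_Suc)
  also have "\<dots> = q (Suc k) a (xs @ [b])"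
    using any[of "e (Suc k)"] any[OF b] e_closed by simp
  finally show ?thesis by simp
qed

lemma q_append_dim_le:
  assumes "dim_le q e a n" "a \<in> E" "xs \<in> lists E" "length xs = n" "ys \<in> lists E"
  shows "q (n + length ys) a (xs @ ys) = q n a xs"
  using assms(5)
proof (induction ys rule: rev_induct)
  case Nil
  then show ?case by simp
next
  case (snoc b ys)
  then have "q (Suc (n + length ys)) a ((xs @ ys) @ [b]) = q (n + length ys) a (xs @ ys)"
    using assms by (intro q_Suc_indep) (auto simp: dim_le_def)
  with snoc show ?case by simp
qed

lemma q_q_shorter:
  assumes "k \<le> n" and F: "F \<in> E" and Gs: "Gs \<in> lists E" "length Gs = n"
    and zs: "zs \<in> lists E" "length zs = k"
  shows "q k (q n F Gs) zs = q n F (map (\<lambda>G. q k G zs) Gs)"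
proof -
  define zs' where "zs' = zs @ map e [Suc k..<Suc n]"
  have zs': "zs' \<in> lists E" "length zs' = n"
    using zs \<open>k \<le> n\<close> map_e_in_lists by (auto simp: zs'_def)
  have pad: "q k w zs = q n w zs'" if "w \<in> E" for w
    unfolding zs'_def using q_pad_le[OF \<open>k \<le> n\<close> that zs] .
  have "q k (q n F Gs) zs = q n (q n F Gs) zs'"
    using pad q_closed F Gs by simp
  also have "\<dots> = q n F (map (\<lambda>G. q n G zs') Gs)"
    using q_q F Gs zs' by simp
  also have "map (\<lambda>G. q n G zs') Gs = map (\<lambda>G. q k G zs) Gs"
    using pad Gs by auto
  finally show ?thesis .
qed

lemma q_q_longer:
  assumes "n \<le> k" and F: "F \<in> E" and Gs: "Gs \<in> lists E" "length Gs = n"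
    and zs: "zs \<in> lists E" "length zs = k"
  shows "q k (q n F Gs) zs = q k F (map (\<lambda>G. q k G zs) Gs @ drop n zs)"
proof -
  define Gs' where "Gs' = Gs @ map e [Suc n..<Suc k]"
  have Gs': "Gs' \<in> lists E" "length Gs' = k"
    using Gs \<open>n \<le> k\<close> map_e_in_lists by (auto simp: Gs'_def)
  have "q k (q n F Gs) zs = q k (q k F Gs') zs"
    using q_pad_le[OF \<open>n \<le> k\<close> F Gs] by (simp add: Gs'_def)
  also have "\<dots> = q k F (map (\<lambda>G. q k G zs) Gs')"
    using q_q[OF F Gs'(1) zs(1) Gs'(2) zs(2)] .
  also have "\<dots> = q k F (map (\<lambda>G. q k G zs) Gs @ drop n zs)"
    using map_q_e_range[OF zs \<open>n \<le> k\<close>] by (simp add: Gs'_def)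
  finally show ?thesis .
qed

lemma q_q_dim_le:
  assumes F: "F \<in> E" "dim_le q e F n" and Gs: "Gs \<in> lists E" "length Gs = n"
    and zs: "zs \<in> lists E" "length zs = k"
  shows "q k (q n F Gs) zs = q n F (map (\<lambda>G. q k G zs) Gs)"
proof (cases "k \<le> n")
  case True
  then show ?thesis
    using q_q_shorter F(1) Gs zs by blast
next
  case False
  have "\<forall>G\<in>set Gs. q k G zs \<in> E"
    using Gs(1) zs q_closed by blast
  moreover have "drop n zs \<in> lists E"
    using zs(1) by (auto dest: in_set_dropD)
  ultimately have "q (n + length (drop n zs)) F (map (\<lambda>G. q k G zs) Gs @ drop n zs)
      = q n F (map (\<lambda>G. q k G zs) Gs)"
    using Gs(2) by (intro q_append_dim_le[OF F(2) F(1)]) auto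
  then show ?thesis
    using q_q_longer[OF _ F(1) Gs zs] zs(2) False by simp
qed

lemma dim_le_q:
  assumes F: "F \<in> E" "dim_le q e F n" and Gs: "Gs \<in> lists E" "length Gs = n"
    and dim: "\<forall>G\<in>set Gs. dim_le q e G k"
  shows "dim_le q e (q n F Gs) k"
  unfolding dim_le_def indep_of_evec_skip
proof (intro allI impI)
  fix m assume "k < m"
  then have "map (\<lambda>G. q m G (evec_skip e m)) Gs = Gs"
    using dim by (auto simp: dim_le_def indep_of_evec_skip intro: map_idI)
  then show "q m (q n F Gs) (evec_skip e m) = q n F Gs"
    using q_q_dim_le[where zs = "evec_skip e m" and k = m] F Gs evec_skip_in_lists \<open>k < m\<close>
    by (simp add: length_evec_skip)
qed

lemma repr_opsI:
  assumes "a \<in> E" "dim_le q e a k" "\<And>xs. xs \<in> lists E \<Longrightarrow> length xs = k \<Longrightarrow> f xs = q k a xs"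
  shows "(k, f) \<in> repr_ops E q e"
proof -
  have "f (evec e k) = a"
    using assms(1,3) q_evec evec_in_lists by simp
  then show ?thesis
    using assms q_closed unfolding repr_ops_def by auto
qed

lemma repr_ops_proj: "i < k \<Longrightarrow> (k, \<lambda>xs. xs ! i) \<in> repr_ops E q e"
  by (rule repr_opsI[of "e (Suc i)"]) (auto simp: e_closed dim_le_e q_e_nth)

lemma repr_ops_basic: "(ar s, ops s) \<in> repr_ops E q e"
proof (rule repr_opsI)
  show "ops s (evec e (ar s)) \<in> E"
    using ops_closed evec_in_lists by simp
  show "dim_le q e (ops s (evec e (ar s))) (ar s)"
    using evec_in_lists by (intro dim_le_ops) (auto intro: dim_le_e)
  show "ops s as = q (ar s) (ops s (evec e (ar s))) as" if "as \<in> lists E" "length as = ar s" for as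
    using q_ops[of "evec e (ar s)" s as "ar s"] map_q_evec[of as "ar s" "ar s"] evec_in_lists that
    by simp
qed

lemma repr_ops_comp:
  assumes f: "(n, f) \<in> repr_ops E q e" and gs: "\<forall>i<n. (k, gs i) \<in> repr_ops E q e"
  shows "(k, \<lambda>xs. f (map (\<lambda>i. gs i xs) [0..<n])) \<in> repr_ops E q e"
proof -
  define F where "F = f (evec e n)"
  define Gs where "Gs = map (\<lambda>i. gs i (evec e k)) [0..<n]"
  have F: "F \<in> E" "dim_le q e F n"
    using repr_opsD(1,2)[OF f] evec_in_lists by (auto simp: F_def)
  have Gs: "Gs \<in> lists E" "length Gs = n" "\<forall>G\<in>set Gs. dim_le q e G k"
    using repr_opsD(1,2)[OF gs[rule_format]] evec_in_lists by (auto simp: Gs_def)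
  show ?thesis
  proof (rule repr_opsI)
    show "q n F Gs \<in> E"
      using F Gs q_closed by blast
    show "dim_le q e (q n F Gs) k"
      using dim_le_q F Gs by blast
    fix xs assume xs: "xs \<in> lists E" "length xs = k"
    have gs_xs: "map (\<lambda>i. gs i xs) [0..<n] = map (\<lambda>G. q k G xs) Gs"
      using repr_opsD(3)[OF gs[rule_format] xs] by (simp add: Gs_def)
    have "map (\<lambda>i. gs i xs) [0..<n] \<in> lists E"
      using repr_opsD(1)[OF gs[rule_format] xs] by auto
    then have "f (map (\<lambda>i. gs i xs) [0..<n]) = q n F (map (\<lambda>i. gs i xs) [0..<n])"
      unfolding F_def by (rule repr_opsD(3)[OF f]) simp
    also have "\<dots> = q n F (map (\<lambda>G. q k G xs) Gs)"
      by (simp only: gs_xs)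
    also have "\<dots> = q k (q n F Gs) xs"
      using q_q_dim_le[OF F Gs(1,2) xs] by simp
    finally show "f (map (\<lambda>i. gs i xs) [0..<n]) = q k (q n F Gs) xs" .
  qed
qed

lemma repr_ops_restr:
  assumes f: "(Suc k, f) \<in> repr_ops E q e"
    and g: "\<forall>xs y. xs \<in> lists E \<longrightarrow> length xs = k \<longrightarrow> y \<in> E \<longrightarrow> g xs = f (xs @ [y])"
  shows "(k, g) \<in> repr_ops E q e"
proof -
  define F where "F = f (evec e (Suc k))"
  have F: "F \<in> E" "dim_le q e F (Suc k)"
    using repr_opsD(1,2)[OF f] evec_in_lists by (auto simp: F_def)
  have f_F: "f as = q (Suc k) F as" if "as \<in> lists E" "length as = Suc k" for as
    using repr_opsD(3)[OF f that] by (simp add: F_def)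
  have g_e: "g (evec e k) = f (evec e k @ [y])" if "y \<in> E" for y
    using g evec_in_lists that by simp
  show ?thesis
  proof (rule repr_opsI)
    show "F \<in> E"
      by (rule F(1))
    have "q (Suc k) F (evec_skip e (Suc k)) = g (evec e k)"
      using f_F[of "evec_skip e (Suc k)"] g_e[of "e (Suc (Suc k))"] evec_skip_in_lists e_closed
      by (simp add: evec_skip_def)
    also have "\<dots> = F"
      using g_e[of "e (Suc k)"] e_closed by (simp add: F_def upt_Suc)
    finally have "indep_of q e F (Suc k)"
      by (simp add: indep_of_evec_skip)
    with F(2) show "dim_le q e F k"
      unfolding dim_le_def by (metis Suc_lessI)
    fix xs assume xs: "xs \<in> lists E" "length xs = k"
    have "g xs = q (Suc k) F (xs @ [e (Suc k)])"
      using g f_F xs e_closed by simp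
    also have "\<dots> = q k F xs"
      using q_pad[of k "Suc k" F xs] F(1) xs by (simp add: upt_Suc)
    finally show "g xs = q k F xs" .
  qed
qed

lemma repr_ops_ext:
  assumes "(k, f) \<in> repr_ops E q e" "\<forall>xs. xs \<in> lists E \<longrightarrow> length xs = k \<longrightarrow> g xs = f xs"
  shows "(k, g) \<in> repr_ops E q e"
proof (rule repr_opsI)
  show "f (evec e k) \<in> E"
    using repr_opsD(1)[OF assms(1) evec_in_lists] by simp
  show "dim_le q e (f (evec e k)) k"
    by (rule repr_opsD(2)[OF assms(1)])
  show "g xs = q k (f (evec e k)) xs" if "xs \<in> lists E" "length xs = k" for xs
    using assms(2) repr_opsD(3)[OF assms(1) that] that by simp
qed

lemma Clo_subset_repr_ops: "Clo ar E ops \<subseteq> repr_ops E q e"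
proof (rule subrelI)
  fix k f assume "(k, f) \<in> Clo ar E ops"
  then show "(k, f) \<in> repr_ops E q e"
  proof (induction rule: Clo.induct)
    case (clo_proj i k)
    then show ?case by (rule repr_ops_proj)
  next
    case (clo_basic s)
    then show ?case by (rule repr_ops_basic)
  next
    case (clo_comp n f k gs)
    have "\<forall>i<n. (k, gs i) \<in> repr_ops E q e"
      using clo_comp.IH(2) by blast
    with clo_comp.IH(1) show ?case by (rule repr_ops_comp)
  next
    case (clo_restr k f g)
    from clo_restr.IH clo_restr.hyps(2) show ?case by (rule repr_ops_restr)
  next
    case (clo_ext k f g)
    from clo_ext.IH clo_ext.hyps(2) show ?case by (rule repr_ops_ext)
  qed
qed

lemma gen_e_subset: "gen_e ar ops e \<subseteq> E"
proof
  fix a assume "a \<in> gen_e ar ops e"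
  then show "a \<in> E"
    by (induction rule: gen_e.induct) (auto intro: e_closed ops_closed)
qed

lemma eval_trm_q:
  assumes "wf_trm ar t" "vars_trm t \<subseteq> {..<n}" "\<forall>i<n. \<rho> i \<in> E"
  shows "eval_trm ops \<rho> t = q n (eval_trm ops (\<lambda>i. e (Suc i)) t) (map \<rho> [0..<n])"
  using assms
proof (induction t)
  case (Var i)
  moreover have "map \<rho> [0..<n] \<in> lists E"
    using Var by auto
  ultimately show ?case
    using q_e_nth[of "Suc i" n "map \<rho> [0..<n]"] by auto
next
  case (App s ts)
  let ?\<rho>s = "map \<rho> [0..<n]"
  have ts: "map (eval_trm ops (\<lambda>i. e (Suc i))) ts \<in> lists E"
    using App.prems(1) e_closed by (auto intro!: eval_trm_closed[OF is_alg])
  have \<rho>s: "?\<rho>s \<in> lists E"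
    using App.prems(3) by auto
  have "q n (eval_trm ops (\<lambda>i. e (Suc i)) (App s ts)) ?\<rho>s
      = ops s (map (\<lambda>t. q n (eval_trm ops (\<lambda>i. e (Suc i)) t) ?\<rho>s) ts)"
    using q_ops[OF ts _ \<rho>s] App.prems(1) by (simp add: comp_def)
  also have "\<dots> = ops s (map (eval_trm ops \<rho>) ts)"
  proof -
    have "eval_trm ops \<rho> u = q n (eval_trm ops (\<lambda>i. e (Suc i)) u) ?\<rho>s" if "u \<in> set ts" for u
      using that App.prems by (intro App.IH) auto
    then have "map (\<lambda>t. q n (eval_trm ops (\<lambda>i. e (Suc i)) t) ?\<rho>s) ts = map (eval_trm ops \<rho>) ts"
      by simp
    then show ?thesis by (simp only:)
  qed
  finally show ?case by simp
qed

lemma dim_le_term_value: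
  "wf_trm ar t \<Longrightarrow> vars_trm t \<subseteq> {..<n} \<Longrightarrow> dim_le q e (eval_trm ops (\<lambda>i. e (Suc i)) t) n"
proof (induction t)
  case (Var i)
  then show ?case by (auto intro: dim_le_e)
next
  case (App s ts)
  have "dim_le q e (eval_trm ops (\<lambda>i. e (Suc i)) u) n" if "u \<in> set ts" for u
  proof -
    have "wf_trm ar u" "vars_trm u \<subseteq> {..<n}"
      using that App.prems by auto
    with that show ?thesis by (rule App.IH)
  qed
  with App.prems(1) show ?case
    using e_closed by (auto intro!: dim_le_ops eval_trm_closed[OF is_alg])
qed

lemma gen_e_finite_dim:
  assumes "a \<in> gen_e ar ops e"
  obtains k where "dim_le q e a k"
proof -
  obtain t where t: "wf_trm ar t" "a = eval_trm ops (\<lambda>i. e (Suc i)) t"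
    using assms unfolding gen_e_iff_term_value by blast
  obtain n where "vars_trm t \<subseteq> {..<n}"
    using vars_trm_bounded by blast
  with t show ?thesis
    using dim_le_term_value[of t n] that by auto
qed

lemma q_term_value_in_Clo:
  assumes t: "wf_trm ar t" "vars_trm t \<subseteq> {..<n}"
  shows "(n, q n (eval_trm ops (\<lambda>i. e (Suc i)) t)) \<in> Clo ar E ops"
proof (rule Clo.clo_ext[OF term_op_in_Clo[OF t]], intro allI impI)
  fix xs assume xs: "xs \<in> lists E" "length xs = n"
  then have "map (\<lambda>i. xs ! i) [0..<n] = xs"
    using map_nth[of xs] by simp
  with xs show "q n (eval_trm ops (\<lambda>i. e (Suc i)) t) xs = eval_trm ops (\<lambda>i. xs ! i) t"
    using eval_trm_q[OF t, of "\<lambda>i. xs ! i"] by auto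
qed

lemma q_in_Clo_restrict:
  assumes top: "(M, q M a) \<in> Clo ar E ops" and a: "a \<in> E" "dim_le q e a k" and "k \<le> M"
  shows "(k, q k a) \<in> Clo ar E ops"
  using \<open>k \<le> M\<close>
proof (induction rule: inc_induct)
  case base
  show ?case by (rule top)
next
  case (step m)
  show ?case
  proof (rule Clo.clo_restr[OF step.IH], intro allI impI)
    fix xs y assume "xs \<in> lists E" "length xs = m" "y \<in> E"
    moreover have "indep_of q e a (Suc m)"
      using a(2) step.hyps(1) unfolding dim_le_def by simp
    ultimately show "q m a xs = q (Suc m) a (xs @ [y])"
      using q_Suc_indep a(1) by simp
  qed
qed

lemma q_in_Clo_if_minimal:
  assumes minimal: "minimal_clone ar E ops e" and a: "a \<in> E" "dim_le q e a k"
  shows "(k, q k a) \<in> Clo ar E ops"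
proof -
  have "a \<in> gen_e ar ops e"
    using a(1) minimal unfolding minimal_clone_def by simp
  then obtain t where t: "wf_trm ar t" "a = eval_trm ops (\<lambda>i. e (Suc i)) t"
    unfolding gen_e_iff_term_value by blast
  obtain N where "vars_trm t \<subseteq> {..<N}" "k \<le> N"
    using vars_trm_bounded by blast
  with t have "(N, q N a) \<in> Clo ar E ops"
    using q_term_value_in_Clo by simp
  then show ?thesis
    using q_in_Clo_restrict a \<open>k \<le> N\<close> by blast
qed

lemma repr_ops_subset_Clo:
  assumes "minimal_clone ar E ops e"
  shows "repr_ops E q e \<subseteq> Clo ar E ops"
proof (rule subrelI)
  fix k f assume f: "(k, f) \<in> repr_ops E q e"
  then have "(k, q k (f (evec e k))) \<in> Clo ar E ops"
    using repr_opsD(1,2)[OF f] evec_in_lists by (intro q_in_Clo_if_minimal[OF assms]) auto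
  then show "(k, f) \<in> Clo ar E ops"
  proof (rule Clo.clo_ext, intro allI impI)
    fix xs assume "xs \<in> lists E" "length xs = k"
    then show "f xs = q k (f (evec e k)) xs"
      by (rule repr_opsD(3)[OF f])
  qed
qed

lemma Clo_eq_repr_ops_if_minimal:
  "minimal_clone ar E ops e \<Longrightarrow> Clo ar E ops = repr_ops E q e"
  using Clo_subset_repr_ops repr_ops_subset_Clo by blast

lemma minimal_if_Clo_eq_repr_ops:
  assumes fin: "\<And>a. a \<in> E \<Longrightarrow> \<exists>k. dim_le q e a k" and eq: "Clo ar E ops = repr_ops E q e"
  shows "minimal_clone ar E ops e"
proof -
  have "a \<in> gen_e ar ops e" if a: "a \<in> E" for a
  proof -
    obtain k where "dim_le q e a k"
      using fin a by blast
    with a have "(k, q k a) \<in> Clo ar E ops"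
      unfolding eq by (intro repr_opsI) auto
    moreover have "evec e k \<in> lists (gen_e ar ops e)"
      by (auto simp: gen_e.gen_e_base)
    ultimately have "q k a (evec e k) \<in> gen_e ar ops e"
      using Clo_closed_gen_e[OF gen_e_subset] by simp
    with a show ?thesis
      using q_evec by simp
  qed
  then show ?thesis
    unfolding minimal_clone_def using gen_e_subset by blast
qed

lemma eval_trm_eq_proj:
  assumes t: "wf_trm ar t" "eval_trm ops (\<lambda>i. e (Suc i)) t = e j" and "1 \<le> j"
    and \<rho>: "\<forall>i. \<rho> i \<in> E"
  shows "eval_trm ops \<rho> t = \<rho> (j - 1)"
proof -
  obtain N where vars: "vars_trm t \<subseteq> {..<N}" and "j \<le> N"
    using vars_trm_bounded by blast
  have "eval_trm ops \<rho> t = q N (e j) (map \<rho> [0..<N])"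
    using eval_trm_q[OF t(1) vars] \<rho> t(2) by simp
  also have "\<dots> = \<rho> (j - 1)"
    using q_e_nth[of j N "map \<rho> [0..<N]"] \<rho> \<open>1 \<le> j\<close> \<open>j \<le> N\<close>
    by (auto simp: in_lists_conv_set)
  finally show ?thesis .
qed

end

section \<open>Products of clone algebras\<close>

lemma dim_le_prod:
  "dim_le qC eC c k \<Longrightarrow> dim_le qD eD d k \<Longrightarrow> dim_le (prod_q qC qD) (prod_e eC eD) (c, d) k"
  by (simp add: dim_le_def indep_of_def prod_q_def prod_e_def comp_def)

locale clone_algebra_pair =
  C: clone_algebra ar C opsC qC eC + D: clone_algebra ar D opsD qD eD
  for ar :: "'f \<Rightarrow> nat"
    and C :: "'c set" and opsC qC eC
    and D :: "'d set" and opsD qD eD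
begin

lemma map_fst_in_lists: "xs \<in> lists (C \<times> D) \<Longrightarrow> map fst xs \<in> lists C"
  and map_snd_in_lists: "xs \<in> lists (C \<times> D) \<Longrightarrow> map snd xs \<in> lists D"
  by (induction xs) auto

sublocale CD: clone_algebra ar "C \<times> D" "prod_ops opsC opsD" "prod_q qC qD" "prod_e eC eD"
  unfolding clone_algebra_def clone_alg_def
proof (intro conjI allI impI)
  show "is_alg ar (C \<times> D) (prod_ops opsC opsD)"
    unfolding is_alg_def prod_ops_def
    using C.ops_closed[OF map_fst_in_lists] D.ops_closed[OF map_snd_in_lists] by auto
  show "prod_e eC eD i \<in> C \<times> D" if "1 \<le> i" for i
    using C.e_closed D.e_closed that by (simp add: prod_e_def)
  show "prod_q qC qD n x ys \<in> C \<times> D" if "x \<in> C \<times> D" "ys \<in> lists (C \<times> D)" "length ys = n" for n x ys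
    using C.q_closed D.q_closed that map_fst_in_lists map_snd_in_lists
    by (auto simp: prod_q_def mem_Times_iff simp del: in_lists_conv_set)
  show "prod_q qC qD n (prod_e eC eD i) xs = xs ! (i - 1)"
    if "1 \<le> i" "i \<le> n" "xs \<in> lists (C \<times> D)" "length xs = n" for n i xs
    using C.q_e_nth[OF that(1,2) map_fst_in_lists[OF that(3)]]
      D.q_e_nth[OF that(1,2) map_snd_in_lists[OF that(3)]] that
    by (simp add: prod_q_def prod_e_def)
  show "prod_q qC qD n (prod_e eC eD j) xs = prod_e eC eD j"
    if "n < j" "xs \<in> lists (C \<times> D)" "length xs = n" for n j xs
    using C.q_e_beyond[OF that(1) map_fst_in_lists[OF that(2)]]
      D.q_e_beyond[OF that(1) map_snd_in_lists[OF that(2)]] that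
    by (simp add: prod_q_def prod_e_def)
  show "prod_q qC qD n x (evec (prod_e eC eD) n) = x" if "x \<in> C \<times> D" for n x
    using C.q_evec D.q_evec that by (auto simp: prod_q_def prod_e_def comp_def)
  show "prod_q qC qD k x ys = prod_q qC qD n x (ys @ map (prod_e eC eD) [Suc k..<Suc n])"
    if "k < n" "x \<in> C \<times> D" "ys \<in> lists (C \<times> D)" "length ys = k" for n k x ys
    using C.q_pad[OF that(1) _ map_fst_in_lists[OF that(3)]]
      D.q_pad[OF that(1) _ map_snd_in_lists[OF that(3)]] that
    by (auto simp: prod_q_def prod_e_def comp_def)
  show "prod_q qC qD n (prod_q qC qD n x ys) zs = prod_q qC qD n x (map (\<lambda>y. prod_q qC qD n y zs) ys)"
    if "x \<in> C \<times> D" "ys \<in> lists (C \<times> D)" "zs \<in> lists (C \<times> D)" "length ys = n" "length zs = n"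
    for n x ys zs
    using C.q_q[OF _ map_fst_in_lists[OF that(2)] map_fst_in_lists[OF that(3)]]
      D.q_q[OF _ map_snd_in_lists[OF that(2)] map_snd_in_lists[OF that(3)]] that
    by (auto simp: prod_q_def comp_def)
  show "prod_q qC qD n (prod_ops opsC opsD s xs) ys
      = prod_ops opsC opsD s (map (\<lambda>x. prod_q qC qD n x ys) xs)"
    if "xs \<in> lists (C \<times> D)" "length xs = ar s" "ys \<in> lists (C \<times> D)" "length ys = n" for s n xs ys
    using C.q_ops[OF map_fst_in_lists[OF that(1)] _ map_fst_in_lists[OF that(3)]]
      D.q_ops[OF map_snd_in_lists[OF that(1)] _ map_snd_in_lists[OF that(3)]] that
    by (simp add: prod_q_def prod_ops_def comp_def)
qed

lemma prod_minimal_imp_indep: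
  assumes "minimal_clone ar (C \<times> D) (prod_ops opsC opsD) (prod_e eC eD)"
  shows "indep_varieties ar (Id_of ar C opsC) (Id_of ar D opsD)"
proof -
  have "(eC 1, eD 2) \<in> C \<times> D"
    using C.e_closed D.e_closed by simp
  then have "(eC 1, eD 2) \<in> gen_e ar (prod_ops opsC opsD) (prod_e eC eD)"
    using assms by (metis minimal_clone_def)
  then obtain t where t: "wf_trm ar t"
    "(eC 1, eD 2) = eval_trm (prod_ops opsC opsD) (\<lambda>i. prod_e eC eD (Suc i)) t"
    unfolding gen_e_iff_term_value by blast
  then have tC: "eval_trm opsC (\<lambda>i. eC (Suc i)) t = eC 1"
    and tD: "eval_trm opsD (\<lambda>i. eD (Suc i)) t = eD 2"
    by (simp_all add: eval_trm_prod_ops prod_e_def comp_def)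
  define t' where "t' = subst2 t (Var 0) (Var 1)"
  have t': "wf_trm ar t'" "vars_trm t' \<subseteq> {0, 1}"
    using t(1) vars_subst2[of t "Var 0" "Var 1"] unfolding t'_def by (auto intro: wf_subst2)
  have "(t', Var 0) \<in> Id_of ar C opsC"
    using C.eval_trm_eq_proj[OF t(1) tC] t'(1) by (intro Id_ofI) (auto simp: t'_def eval_subst2)
  moreover have "(t', Var 1) \<in> Id_of ar D opsD"
    using D.eval_trm_eq_proj[OF t(1) tD] t'(1) by (intro Id_ofI) (auto simp: t'_def eval_subst2)
  ultimately show ?thesis
    unfolding indep_varieties_def using t' by blast
qed

end

locale minimal_clone_pair = clone_algebra_pair +
  assumes minimal_C: "minimal_clone ar C opsC eC" and minimal_D: "minimal_clone ar D opsD eD"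
begin

lemma indep_imp_prod_minimal:
  assumes "indep_varieties ar (Id_of ar C opsC) (Id_of ar D opsD)"
  shows "minimal_clone ar (C \<times> D) (prod_ops opsC opsD) (prod_e eC eD)"
proof -
  obtain t where t: "wf_trm ar t"
    and tC: "(t, Var 0) \<in> Id_of ar C opsC" and tD: "(t, Var 1) \<in> Id_of ar D opsD"
    using assms unfolding indep_varieties_def by blast
  have "(c, d) \<in> gen_e ar (prod_ops opsC opsD) (prod_e eC eD)" if "c \<in> C" "d \<in> D" for c d
  proof -
    have "c \<in> gen_e ar opsC eC" "d \<in> gen_e ar opsD eD"
      using that minimal_C minimal_D unfolding minimal_clone_def by simp_all
    then obtain s1 s2 where s: "wf_trm ar s1" "c = eval_trm opsC (\<lambda>i. eC (Suc i)) s1"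
      "wf_trm ar s2" "d = eval_trm opsD (\<lambda>i. eD (Suc i)) s2"
      unfolding gen_e_iff_term_value by blast
    define u where "u = subst2 t s1 s2"
    have "eval_trm opsC (\<lambda>i. eC (Suc i)) u = c"
      using Id_ofD[OF tC] eval_trm_closed[OF C.is_alg s(3)] C.e_closed s(2) \<open>c \<in> C\<close>
      by (simp add: u_def eval_subst2)
    moreover have "eval_trm opsD (\<lambda>i. eD (Suc i)) u = d"
      using Id_ofD[OF tD] eval_trm_closed[OF D.is_alg s(1)] D.e_closed s(4) \<open>d \<in> D\<close>
      by (simp add: u_def eval_subst2)
    ultimately have "(c, d) = eval_trm (prod_ops opsC opsD) (\<lambda>i. prod_e eC eD (Suc i)) u"
      by (simp add: eval_trm_prod_ops prod_e_def comp_def)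
    moreover have "wf_trm ar u"
      using t s by (simp add: u_def wf_subst2)
    ultimately show ?thesis
      unfolding gen_e_iff_term_value by blast
  qed
  then show ?thesis
    unfolding minimal_clone_def using CD.gen_e_subset by blast
qed

lemma prod_minimal_iff_Clo_eq_repr_ops:
  "minimal_clone ar (C \<times> D) (prod_ops opsC opsD) (prod_e eC eD) \<longleftrightarrow>
   Clo ar (C \<times> D) (prod_ops opsC opsD) = repr_ops (C \<times> D) (prod_q qC qD) (prod_e eC eD)"
proof
  assume "minimal_clone ar (C \<times> D) (prod_ops opsC opsD) (prod_e eC eD)"
  then show "Clo ar (C \<times> D) (prod_ops opsC opsD) = repr_ops (C \<times> D) (prod_q qC qD) (prod_e eC eD)"
    by (rule CD.Clo_eq_repr_ops_if_minimal)
next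
  assume eq: "Clo ar (C \<times> D) (prod_ops opsC opsD) = repr_ops (C \<times> D) (prod_q qC qD) (prod_e eC eD)"
  show "minimal_clone ar (C \<times> D) (prod_ops opsC opsD) (prod_e eC eD)"
  proof (rule CD.minimal_if_Clo_eq_repr_ops[OF _ eq])
    fix x assume "x \<in> C \<times> D"
    then obtain c d where x: "x = (c, d)" and "c \<in> gen_e ar opsC eC" "d \<in> gen_e ar opsD eD"
      using minimal_C minimal_D unfolding minimal_clone_def by auto
    then obtain kc kd where "dim_le qC eC c kc" "dim_le qD eD d kd"
      by (metis C.gen_e_finite_dim D.gen_e_finite_dim)
    then have "dim_le (prod_q qC qD) (prod_e eC eD) x (max kc kd)"
      unfolding x by (intro dim_le_prod) (auto elim: dim_le_mono)
    then show "\<exists>k. dim_le (prod_q qC qD) (prod_e eC eD) x k" ..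
  qed
qed

end

section \<open>Decomposition terms and products of varieties\<close>

lemma sat_id_prod:
  "sat_id A1 ops1 st \<Longrightarrow> sat_id A2 ops2 st \<Longrightarrow> sat_id (A1 \<times> A2) (prod_ops ops1 ops2) st"
  unfolding sat_id_def eval_trm_prod_ops by (auto simp: mem_Times_iff)

lemma sat_id_prod_fst:
  assumes "b \<in> A2" "sat_id (A1 \<times> A2) (prod_ops ops1 ops2) st"
  shows "sat_id A1 ops1 st"
  unfolding sat_id_def
proof (intro allI impI)
  fix \<rho> :: "nat \<Rightarrow> _" assume "\<forall>i. \<rho> i \<in> A1"
  then have "eval_trm (prod_ops ops1 ops2) (\<lambda>i. (\<rho> i, b)) (fst st)
      = eval_trm (prod_ops ops1 ops2) (\<lambda>i. (\<rho> i, b)) (snd st)"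
    using assms unfolding sat_id_def by simp
  then show "eval_trm ops1 \<rho> (fst st) = eval_trm ops1 \<rho> (snd st)"
    by (simp add: eval_trm_prod_ops comp_def)
qed

lemma sat_id_prod_snd:
  assumes "a \<in> A1" "sat_id (A1 \<times> A2) (prod_ops ops1 ops2) st"
  shows "sat_id A2 ops2 st"
  unfolding sat_id_def
proof (intro allI impI)
  fix \<rho> :: "nat \<Rightarrow> _" assume "\<forall>i. \<rho> i \<in> A2"
  then have "eval_trm (prod_ops ops1 ops2) (\<lambda>i. (a, \<rho> i)) (fst st)
      = eval_trm (prod_ops ops1 ops2) (\<lambda>i. (a, \<rho> i)) (snd st)"
    using assms unfolding sat_id_def by simp
  then show "eval_trm ops2 \<rho> (fst st) = eval_trm ops2 \<rho> (snd st)"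
    by (simp add: eval_trm_prod_ops comp_def)
qed

lemma Id_of_prod:
  assumes "C \<noteq> {}" "D \<noteq> {}"
  shows "Id_of ar (C \<times> D) (prod_ops opsC opsD) = Id_of ar C opsC \<inter> Id_of ar D opsD"
proof -
  obtain c d where "c \<in> C" "d \<in> D"
    using assms by blast
  then have "sat_id (C \<times> D) (prod_ops opsC opsD) st \<longleftrightarrow> sat_id C opsC st \<and> sat_id D opsD st" for st
    using sat_id_prod sat_id_prod_fst sat_id_prod_snd by metis
  then show ?thesis
    unfolding Id_of_def by blast
qed

lemma eval_trm_hom:
  assumes alg: "is_alg ar A opsA"
    and hom: "\<forall>s xs. xs \<in> lists A \<longrightarrow> length xs = ar s \<longrightarrow> h (opsA s xs) = opsB s (map h xs)"
  shows "wf_trm ar p \<Longrightarrow> \<forall>i. \<rho> i \<in> A \<Longrightarrow> h (eval_trm opsA \<rho> p) = eval_trm opsB (h \<circ> \<rho>) p"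
proof (induction p)
  case (Var i)
  then show ?case by simp
next
  case (App s ps)
  have "map (eval_trm opsA \<rho>) ps \<in> lists A"
    using eval_trm_closed[OF alg] App.prems by auto
  then have "h (eval_trm opsA \<rho> (App s ps)) = opsB s (map h (map (eval_trm opsA \<rho>) ps))"
    using hom App.prems by simp
  also have "map h (map (eval_trm opsA \<rho>) ps) = map (eval_trm opsB (h \<circ> \<rho>)) ps"
    using App by (auto simp: comp_def)
  finally show ?case by (simp add: comp_def)
qed

lemma sat_id_iso:
  assumes iso: "alg_iso ar A opsA B opsB" and alg: "is_alg ar A opsA"
    and wf: "wf_trm ar p" "wf_trm ar r" and sat: "sat_id B opsB (p, r)"
  shows "sat_id A opsA (p, r)"
  unfolding sat_id_def
proof (intro allI impI)
  obtain h where bij: "bij_betw h A B"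
    and hom: "\<forall>s xs. xs \<in> lists A \<longrightarrow> length xs = ar s \<longrightarrow> h (opsA s xs) = opsB s (map h xs)"
    using iso unfolding alg_iso_def by blast
  fix \<rho> :: "nat \<Rightarrow> _" assume \<rho>: "\<forall>i. \<rho> i \<in> A"
  then have "\<forall>i. (h \<circ> \<rho>) i \<in> B"
    using bij by (auto simp: bij_betw_def)
  then have "h (eval_trm opsA \<rho> p) = h (eval_trm opsA \<rho> r)"
    using eval_trm_hom[OF alg hom] wf \<rho> sat unfolding sat_id_def by simp
  moreover have "eval_trm opsA \<rho> p \<in> A" "eval_trm opsA \<rho> r \<in> A"
    using eval_trm_closed[OF alg] wf \<rho> by auto
  ultimately show "eval_trm opsA \<rho> (fst (p, r)) = eval_trm opsA \<rho> (snd (p, r))"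
    using bij by (simp add: bij_betw_def inj_on_def)
qed

lemma prod_variety_subset_Mod_Int:
  "(prod_variety ar (Var_of ar C opsC) (Var_of ar D opsD) :: ('b set \<times> ('f \<Rightarrow> 'b list \<Rightarrow> 'b)) set)
     \<subseteq> Mod ar (Id_of ar C opsC \<inter> Id_of ar D opsD)"
proof (rule subrelI)
  fix A :: "'b set" and opsA
  assume "(A, opsA) \<in> prod_variety ar (Var_of ar C opsC) (Var_of ar D opsD)"
  then obtain A1 A2 :: "'b set" and ops1 ops2 where alg: "is_alg ar A opsA" "A \<noteq> {}"
    and M: "(A1, ops1) \<in> Var_of ar C opsC" "(A2, ops2) \<in> Var_of ar D opsD"
    and iso: "alg_iso ar A opsA (A1 \<times> A2) (prod_ops ops1 ops2)"
    unfolding prod_variety_def mem_Collect_eq case_prod_conv by blast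
  have "sat_id A opsA (p, r)" if pr: "(p, r) \<in> Id_of ar C opsC \<inter> Id_of ar D opsD" for p r
  proof (rule sat_id_iso[OF iso alg(1)])
    show "wf_trm ar p" "wf_trm ar r"
      using pr unfolding Id_of_def by auto
    show "sat_id (A1 \<times> A2) (prod_ops ops1 ops2) (p, r)"
      using M pr unfolding Mod_def by (auto intro: sat_id_prod)
  qed
  with alg show "(A, opsA) \<in> Mod ar (Id_of ar C opsC \<inter> Id_of ar D opsD)"
    unfolding Mod_def by auto
qed

locale decomposition_term =
  fixes ar :: "'f \<Rightarrow> nat" and C :: "'c set" and opsC :: "'f \<Rightarrow> 'c list \<Rightarrow> 'c"
    and D :: "'d set" and opsD :: "'f \<Rightarrow> 'd list \<Rightarrow> 'd" and t :: "'f trm"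
  assumes alg_C: "is_alg ar C opsC" and alg_D: "is_alg ar D opsD" and wf_t: "wf_trm ar t"
    and t_C: "(t, Var 0) \<in> Id_of ar C opsC" and t_D: "(t, Var 1) \<in> Id_of ar D opsD"
begin

lemma eval_subst2_C:
  "\<forall>i. \<rho> i \<in> C \<Longrightarrow> wf_trm ar p \<Longrightarrow> wf_trm ar r \<Longrightarrow>
    eval_trm opsC \<rho> (subst2 t p r) = eval_trm opsC \<rho> p"
  using Id_ofD[OF t_C] eval_trm_closed[OF alg_C] by (simp add: eval_subst2)

lemma eval_subst2_D:
  "\<forall>i. \<rho> i \<in> D \<Longrightarrow> wf_trm ar p \<Longrightarrow> wf_trm ar r \<Longrightarrow>
    eval_trm opsD \<rho> (subst2 t p r) = eval_trm opsD \<rho> r"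
  using Id_ofD[OF t_D] eval_trm_closed[OF alg_D] by (simp add: eval_subst2)

lemma decomposition_term_swap: "decomposition_term ar D opsD C opsC (subst2 t (Var 1) (Var 0))"
  unfolding decomposition_term_def
proof (intro conjI)
  show "wf_trm ar (subst2 t (Var 1) (Var 0))"
    using wf_t by (simp add: wf_subst2)
  then show "(subst2 t (Var 1) (Var 0), Var 0) \<in> Id_of ar D opsD"
    and "(subst2 t (Var 1) (Var 0), Var 1) \<in> Id_of ar C opsC"
    by (auto intro!: Id_ofI simp: eval_subst2_C eval_subst2_D)
qed (fact alg_C alg_D)+

end

locale decomposition_model = decomposition_term +
  fixes A :: "'b set" and opsA :: "'f \<Rightarrow> 'b list \<Rightarrow> 'b"
  assumes model: "(A, opsA) \<in> Mod ar (Id_of ar C opsC \<inter> Id_of ar D opsD)"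
begin

lemma alg_A: "is_alg ar A opsA" and A_nonempty: "A \<noteq> {}"
  using model unfolding Mod_def by auto

lemma opsA_closed: "xs \<in> lists A \<Longrightarrow> length xs = ar s \<Longrightarrow> opsA s xs \<in> A"
  using alg_A unfolding is_alg_def by blast

lemma eval_eq_if_holds_in_C_D:
  assumes "wf_trm ar p" "wf_trm ar r"
    and "\<And>\<rho>. \<forall>i. \<rho> i \<in> C \<Longrightarrow> eval_trm opsC \<rho> p = eval_trm opsC \<rho> r"
    and "\<And>\<rho>. \<forall>i. \<rho> i \<in> D \<Longrightarrow> eval_trm opsD \<rho> p = eval_trm opsD \<rho> r"
    and "\<forall>i. \<rho> i \<in> A"
  shows "eval_trm opsA \<rho> p = eval_trm opsA \<rho> r"
proof -
  have "(p, r) \<in> Id_of ar C opsC \<inter> Id_of ar D opsD"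
    using assms(1-4) by (auto intro: Id_ofI)
  then have "sat_id A opsA (p, r)"
    using model unfolding Mod_def by blast
  then show ?thesis
    using assms(5) unfolding sat_id_def by simp
qed

definition dec :: "'b \<Rightarrow> 'b \<Rightarrow> 'b" where
  "dec x y = eval_trm opsA (\<lambda>i. if i = 0 then x else y) t"

lemma eval_subst2_A: "eval_trm opsA \<rho> (subst2 t p r) = dec (eval_trm opsA \<rho> p) (eval_trm opsA \<rho> r)"
  by (simp add: dec_def eval_subst2)

lemma dec_closed: "x \<in> A \<Longrightarrow> y \<in> A \<Longrightarrow> dec x y \<in> A"
  unfolding dec_def by (rule eval_trm_closed[OF alg_A wf_t]) auto

lemma dec_idem:
  assumes "x \<in> A"
  shows "dec x x = x"
proof -
  have "eval_trm opsA (\<lambda>i. x) (subst2 t (Var 0) (Var 0)) = eval_trm opsA (\<lambda>i. x) (Var 0)"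
    using assms by (intro eval_eq_if_holds_in_C_D) (auto simp: wf_t wf_subst2 eval_subst2_C eval_subst2_D)
  then show ?thesis
    by (simp add: eval_subst2_A)
qed

lemma dec_dec_left:
  assumes "x \<in> A" "y \<in> A" "z \<in> A"
  shows "dec (dec x y) z = dec x z"
proof -
  let ?\<rho> = "\<lambda>i::nat. if i = 0 then x else if i = 1 then y else z"
  have "eval_trm opsA ?\<rho> (subst2 t (subst2 t (Var 0) (Var 1)) (Var 2))
      = eval_trm opsA ?\<rho> (subst2 t (Var 0) (Var 2))"
    using assms by (intro eval_eq_if_holds_in_C_D) (auto simp: wf_t wf_subst2 eval_subst2_C eval_subst2_D)
  then show ?thesis
    by (simp add: eval_subst2_A)
qed

lemma dec_dec_right:
  assumes "x \<in> A" "y \<in> A" "z \<in> A"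
  shows "dec x (dec y z) = dec x z"
proof -
  let ?\<rho> = "\<lambda>i::nat. if i = 0 then x else if i = 1 then y else z"
  have "eval_trm opsA ?\<rho> (subst2 t (Var 0) (subst2 t (Var 1) (Var 2)))
      = eval_trm opsA ?\<rho> (subst2 t (Var 0) (Var 2))"
    using assms by (intro eval_eq_if_holds_in_C_D) (auto simp: wf_t wf_subst2 eval_subst2_C eval_subst2_D)
  then show ?thesis
    by (simp add: eval_subst2_A)
qed

lemma dec_ops:
  assumes xs: "xs \<in> lists A" "length xs = ar s" and ys: "ys \<in> lists A" "length ys = ar s"
  shows "opsA s (map2 dec xs ys) = dec (opsA s xs) (opsA s ys)"
proof -
  let ?n = "ar s"
  let ?P = "App s (map (\<lambda>i. subst2 t (Var i) (Var (?n + i))) [0..<?n])"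
  let ?L = "App s (map (\<lambda>i. Var i) [0..<?n])"
  let ?R = "App s (map (\<lambda>i. Var (?n + i)) [0..<?n])"
  obtain a where a: "a \<in> A"
    using A_nonempty by blast
  \<comment> \<open>variables \<open>i\<close> and \<open>?n + i\<close> carry \<open>xs ! i\<close> and \<open>ys ! i\<close>\<close>
  define \<rho> where "\<rho> j = (if j < 2 * ?n then (xs @ ys) ! j else a)" for j
  have \<rho>: "\<forall>j. \<rho> j \<in> A"
    using xs ys a by (auto simp: \<rho>_def nth_append)
  have "eval_trm opsA \<rho> ?P = eval_trm opsA \<rho> (subst2 t ?L ?R)"
    using \<rho> by (intro eval_eq_if_holds_in_C_D) (auto simp: wf_t wf_subst2 eval_subst2_C eval_subst2_D comp_def)
  moreover have "map (\<lambda>i. \<rho> i) [0..<?n] = xs" "map (\<lambda>i. \<rho> (?n + i)) [0..<?n] = ys"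
    using xs(2) ys(2) by (auto intro!: nth_equalityI simp: \<rho>_def nth_append)
  moreover have "map (\<lambda>i. dec (\<rho> i) (\<rho> (?n + i))) [0..<?n] = map2 dec xs ys"
    using xs(2) ys(2) by (auto intro!: nth_equalityI simp: \<rho>_def nth_append)
  ultimately show ?thesis
    by (simp add: eval_subst2_A comp_def)
qed

lemma dec_ops_fst:
  assumes xs: "xs \<in> lists A" "length xs = ar s" and a: "a \<in> A"
  shows "dec (opsA s (map (\<lambda>x. dec x a) xs)) a = dec (opsA s xs) a"
proof -
  have "map (\<lambda>x. dec x a) xs = map2 dec xs (replicate (ar s) a)"
    using xs(2) by (simp add: zip_replicate2)
  then have "opsA s (map (\<lambda>x. dec x a) xs) = dec (opsA s xs) (opsA s (replicate (ar s) a))"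
    using dec_ops[OF xs, of "replicate (ar s) a"] a by (simp add: in_lists_conv_set)
  moreover have "opsA s xs \<in> A" "opsA s (replicate (ar s) a) \<in> A"
    using opsA_closed xs a by (auto simp: in_lists_conv_set)
  ultimately show ?thesis
    using dec_dec_left a by simp
qed

lemma dec_ops_snd:
  assumes xs: "xs \<in> lists A" "length xs = ar s" and a: "a \<in> A"
  shows "dec a (opsA s (map (\<lambda>x. dec a x) xs)) = dec a (opsA s xs)"
proof -
  have "map (\<lambda>x. dec a x) xs = map2 dec (replicate (ar s) a) xs"
    using xs(2) by (simp add: zip_replicate1)
  then have "opsA s (map (\<lambda>x. dec a x) xs) = dec (opsA s (replicate (ar s) a)) (opsA s xs)"
    using dec_ops[OF _ _ xs, of "replicate (ar s) a"] a by (simp add: in_lists_conv_set)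
  moreover have "opsA s xs \<in> A" "opsA s (replicate (ar s) a) \<in> A"
    using opsA_closed xs a by (auto simp: in_lists_conv_set)
  ultimately show ?thesis
    using dec_dec_right a by simp
qed

lemma dec_cong_Id_C:
  assumes pr: "(p, r) \<in> Id_of ar C opsC" and \<rho>: "\<forall>i. \<rho> i \<in> A" and y: "y \<in> A"
  shows "dec (eval_trm opsA \<rho> p) y = dec (eval_trm opsA \<rho> r) y"
proof -
  let ?shift = "subst_trm (\<lambda>i. Var (Suc i))"
  have wf: "wf_trm ar p" "wf_trm ar r"
    using pr unfolding Id_of_def by auto
  then have wf_shift: "wf_trm ar (?shift p)" "wf_trm ar (?shift r)"
    by (auto intro: wf_subst_trm)
  \<comment> \<open>variable 0 carries \<open>y\<close>, the variables of \<open>p\<close> and \<open>r\<close> are shifted past it\<close>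
  have "eval_trm opsA (case_nat y \<rho>) (subst2 t (?shift p) (Var 0))
      = eval_trm opsA (case_nat y \<rho>) (subst2 t (?shift r) (Var 0))"
  proof (rule eval_eq_if_holds_in_C_D)
    fix \<sigma> :: "nat \<Rightarrow> _" assume "\<forall>i. \<sigma> i \<in> C"
    then show "eval_trm opsC \<sigma> (subst2 t (?shift p) (Var 0))
        = eval_trm opsC \<sigma> (subst2 t (?shift r) (Var 0))"
      using Id_ofD[OF pr] wf_shift by (simp add: eval_subst2_C eval_shift_trm)
  qed (use wf_shift wf_t \<rho> y in \<open>auto simp: wf_subst2 eval_subst2_D split: nat.split\<close>)
  then show ?thesis
    by (simp add: eval_subst2_A eval_shift_trm)
qed

lemma eval_fst_factor:
  assumes a: "a \<in> A" and \<rho>: "\<forall>i. \<rho> i \<in> A \<and> dec (\<rho> i) a = \<rho> i"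
  shows "wf_trm ar p \<Longrightarrow> eval_trm (\<lambda>s xs. dec (opsA s xs) a) \<rho> p = dec (eval_trm opsA \<rho> p) a"
proof (induction p)
  case (Var i)
  then show ?case using \<rho> by simp
next
  case (App s ps)
  have ps: "map (eval_trm opsA \<rho>) ps \<in> lists A"
    using App.prems eval_trm_closed[OF alg_A] \<rho> by auto
  have IH: "map (eval_trm (\<lambda>s xs. dec (opsA s xs) a) \<rho>) ps
      = map (\<lambda>x. dec x a) (map (eval_trm opsA \<rho>) ps)"
    using App by auto
  have "eval_trm (\<lambda>s xs. dec (opsA s xs) a) \<rho> (App s ps)
      = dec (opsA s (map (\<lambda>x. dec x a) (map (eval_trm opsA \<rho>) ps))) a"
    by (simp only: eval_trm.simps IH)
  also have "\<dots> = dec (opsA s (map (eval_trm opsA \<rho>) ps)) a"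
    using dec_ops_fst[OF ps _ a] App.prems by simp
  finally show ?case by simp
qed

lemma fst_factor_in_Var:
  assumes a: "a \<in> A"
  shows "((\<lambda>x. dec x a) ` A, \<lambda>s xs. dec (opsA s xs) a) \<in> Var_of ar C opsC"
proof -
  have fixed: "y \<in> A \<and> dec y a = y" if y: "y \<in> (\<lambda>x. dec x a) ` A" for y
  proof -
    obtain x where "x \<in> A" "y = dec x a"
      using y by blast
    then show ?thesis
      using a dec_closed dec_dec_left[of x a a] by simp
  qed
  have "is_alg ar ((\<lambda>x. dec x a) ` A) (\<lambda>s xs. dec (opsA s xs) a)"
    unfolding is_alg_def
  proof (intro allI impI)
    fix s xs assume xs: "xs \<in> lists ((\<lambda>x. dec x a) ` A)" "length xs = ar s"
    moreover have "(\<lambda>x. dec x a) ` A \<subseteq> A"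
      using fixed by blast
    ultimately have "xs \<in> lists A"
      using lists_mono by blast
    with xs(2) show "dec (opsA s xs) a \<in> (\<lambda>x. dec x a) ` A"
      using opsA_closed by blast
  qed
  moreover have "sat_id ((\<lambda>x. dec x a) ` A) (\<lambda>s xs. dec (opsA s xs) a) (p, r)"
    if pr: "(p, r) \<in> Id_of ar C opsC" for p r
    unfolding sat_id_def
  proof (intro allI impI)
    fix \<rho> :: "nat \<Rightarrow> 'b" assume "\<forall>i. \<rho> i \<in> (\<lambda>x. dec x a) ` A"
    then have \<rho>: "\<forall>i. \<rho> i \<in> A \<and> dec (\<rho> i) a = \<rho> i"
      using fixed by blast
    have "wf_trm ar p" "wf_trm ar r"
      using pr unfolding Id_of_def by auto
    then show "eval_trm (\<lambda>s xs. dec (opsA s xs) a) \<rho> (fst (p, r))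
        = eval_trm (\<lambda>s xs. dec (opsA s xs) a) \<rho> (snd (p, r))"
      using eval_fst_factor[OF a \<rho>] dec_cong_Id_C[OF pr _ a] \<rho> by simp
  qed
  ultimately show ?thesis
    unfolding Mod_def using a by auto
qed

lemma snd_factor_in_Var:
  assumes a: "a \<in> A"
  shows "((\<lambda>x. dec a x) ` A, \<lambda>s xs. dec a (opsA s xs)) \<in> Var_of ar D opsD"
proof -
  interpret swapped: decomposition_model ar D opsD C opsC "subst2 t (Var 1) (Var 0)" A opsA
    using decomposition_term_swap model
    by (simp add: decomposition_model_def decomposition_model_axioms_def Int_commute)
  have "swapped.dec x y = dec y x" for x y
    unfolding swapped.dec_def dec_def eval_subst2
    by (rule arg_cong[where f = "\<lambda>\<rho>. eval_trm opsA \<rho> t"]) auto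
  then show ?thesis
    using swapped.fst_factor_in_Var[OF a] by simp
qed

lemma model_in_prod_variety:
  "(A, opsA) \<in> prod_variety ar (Var_of ar C opsC) (Var_of ar D opsD)"
proof -
  obtain a where a: "a \<in> A"
    using A_nonempty by blast
  define h where "h x = (dec x a, dec a x)" for x
  have h_inv: "dec (fst (h x)) (snd (h x)) = x" if "x \<in> A" for x
    using that a dec_dec_left dec_dec_right dec_idem dec_closed by (simp add: h_def)
  have "h ` A = (\<lambda>x. dec x a) ` A \<times> (\<lambda>x. dec a x) ` A"
  proof
    show "h ` A \<subseteq> (\<lambda>x. dec x a) ` A \<times> (\<lambda>x. dec a x) ` A"
      by (auto simp: h_def)
    show "(\<lambda>x. dec x a) ` A \<times> (\<lambda>x. dec a x) ` A \<subseteq> h ` A"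
    proof clarify
      fix u v assume "u \<in> A" "v \<in> A"
      then have "h (dec u v) = (dec u a, dec a v)"
        using a dec_dec_left dec_dec_right by (simp add: h_def)
      with \<open>u \<in> A\<close> \<open>v \<in> A\<close> show "(dec u a, dec a v) \<in> h ` A"
        using dec_closed by (metis image_eqI)
    qed
  qed
  moreover have "inj_on h A"
    using h_inv by (metis inj_onI)
  moreover have "h (opsA s xs)
      = prod_ops (\<lambda>s xs. dec (opsA s xs) a) (\<lambda>s xs. dec a (opsA s xs)) s (map h xs)"
    if "xs \<in> lists A" "length xs = ar s" for s xs
    using dec_ops_fst[OF that a] dec_ops_snd[OF that a]
    by (simp add: h_def prod_ops_def comp_def)
  ultimately have "alg_iso ar A opsA ((\<lambda>x. dec x a) ` A \<times> (\<lambda>x. dec a x) ` A)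
      (prod_ops (\<lambda>s xs. dec (opsA s xs) a) (\<lambda>s xs. dec a (opsA s xs)))"
    unfolding alg_iso_def bij_betw_def by blast
  then show ?thesis
    unfolding prod_variety_def using alg_A A_nonempty fst_factor_in_Var[OF a] snd_factor_in_Var[OF a]
    by blast
qed

end

lemma (in decomposition_term) Mod_Int_eq_prod_variety:
  "(Mod ar (Id_of ar C opsC \<inter> Id_of ar D opsD) :: ('b set \<times> ('f \<Rightarrow> 'b list \<Rightarrow> 'b)) set)
     = prod_variety ar (Var_of ar C opsC) (Var_of ar D opsD)"
proof
  show "(Mod ar (Id_of ar C opsC \<inter> Id_of ar D opsD) :: ('b set \<times> ('f \<Rightarrow> 'b list \<Rightarrow> 'b)) set)
      \<subseteq> prod_variety ar (Var_of ar C opsC) (Var_of ar D opsD)"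
  proof (rule subrelI)
    fix A :: "'b set" and opsA
    assume "(A, opsA) \<in> Mod ar (Id_of ar C opsC \<inter> Id_of ar D opsD)"
    then interpret decomposition_model ar C opsC D opsD t A opsA
      by unfold_locales
    show "(A, opsA) \<in> prod_variety ar (Var_of ar C opsC) (Var_of ar D opsD)"
      by (rule model_in_prod_variety)
  qed
qed (rule prod_variety_subset_Mod_Int)

theorem theorem11p17:
  fixes ar :: "'f \<Rightarrow> nat"
    and C :: "'c set" and opsC :: "'f \<Rightarrow> 'c list \<Rightarrow> 'c"
    and qC :: "nat \<Rightarrow> 'c \<Rightarrow> 'c list \<Rightarrow> 'c" and eC :: "nat \<Rightarrow> 'c"
    and D :: "'d set" and opsD :: "'f \<Rightarrow> 'd list \<Rightarrow> 'd"
    and qD :: "nat \<Rightarrow> 'd \<Rightarrow> 'd list \<Rightarrow> 'd" and eD :: "nat \<Rightarrow> 'd"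
  assumes "clone_alg ar C opsC qC eC" and "minimal_clone ar C opsC eC"
    and "clone_alg ar D opsD qD eD" and "minimal_clone ar D opsD eD"
  shows "(minimal_clone ar (C \<times> D) (prod_ops opsC opsD) (prod_e eC eD)
            \<longleftrightarrow> indep_varieties ar (Id_of ar C opsC) (Id_of ar D opsD))
       \<and> (minimal_clone ar (C \<times> D) (prod_ops opsC opsD) (prod_e eC eD)
            \<longleftrightarrow> Clo ar (C \<times> D) (prod_ops opsC opsD) = repr_ops (C \<times> D) (prod_q qC qD) (prod_e eC eD))
       \<and> (minimal_clone ar (C \<times> D) (prod_ops opsC opsD) (prod_e eC eD) \<longrightarrow>
            (Var_of ar (C \<times> D) (prod_ops opsC opsD) :: ('b set \<times> ('f \<Rightarrow> 'b list \<Rightarrow> 'b)) set)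
              = prod_variety ar (Var_of ar C opsC) (Var_of ar D opsD)
          \<and> (Var_of ar (C \<times> D) (prod_ops opsC opsD) :: ('b set \<times> ('f \<Rightarrow> 'b list \<Rightarrow> 'b)) set)
              = join_variety ar (Id_of ar C opsC) (Id_of ar D opsD))"
proof -
  interpret minimal_clone_pair ar C opsC qC eC D opsD qD eD
    using assms by (simp add: minimal_clone_pair_def minimal_clone_pair_axioms_def
        clone_algebra_pair_def clone_algebra_def)
  let ?minimal = "minimal_clone ar (C \<times> D) (prod_ops opsC opsD) (prod_e eC eD)"
  have indep: "?minimal \<longleftrightarrow> indep_varieties ar (Id_of ar C opsC) (Id_of ar D opsD)"
    using prod_minimal_imp_indep indep_imp_prod_minimal by blast
  have varieties:
    "(Var_of ar (C \<times> D) (prod_ops opsC opsD) :: ('b set \<times> ('f \<Rightarrow> 'b list \<Rightarrow> 'b)) set)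
        = prod_variety ar (Var_of ar C opsC) (Var_of ar D opsD)
     \<and> (Var_of ar (C \<times> D) (prod_ops opsC opsD) :: ('b set \<times> ('f \<Rightarrow> 'b list \<Rightarrow> 'b)) set)
        = join_variety ar (Id_of ar C opsC) (Id_of ar D opsD)" if minimal: ?minimal
  proof -
    obtain t where "wf_trm ar t" "(t, Var 0) \<in> Id_of ar C opsC" "(t, Var 1) \<in> Id_of ar D opsD"
      using minimal indep unfolding indep_varieties_def by blast
    then interpret decomposition_term ar C opsC D opsD t
      using C.is_alg D.is_alg by unfold_locales
    have "Id_of ar (C \<times> D) (prod_ops opsC opsD) = Id_of ar C opsC \<inter> Id_of ar D opsD"
      using C.e_closed[of 1] D.e_closed[of 1] by (intro Id_of_prod) auto
    then show ?thesis
      using Mod_Int_eq_prod_variety unfolding join_variety_def by simp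
  qed
  show ?thesis
    using indep prod_minimal_iff_Clo_eq_repr_ops varieties by blast
qed

end
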